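(* Let $G\cong\mathbb Z/2\mathbb Z\times\mathbb Z/2\mathbb Z$ with generators $\sigma_1,\sigma_2$, and let $M$ be a $\mathbb Z[G]$-module, written multiplicatively, such that $(M,\sigma_1,\sigma_2)$ satisfies QH90. Then \[\ker(1-\sigma_1)(1-\sigma_2)=\ker(1-\sigma_1)\cdot\ker(1-\sigma_2)\] if and only if the following holds: for all $m_1,m_2\in M$ satisfying (1) $(1+\sigma_1)\cdot m_1=1=(1+\sigma_2)\cdot m_2$ and (2) $m_1\,\sigma_1(m_2)=m_2\,\sigma_2(m_1)$, there exists $n\in M$ with $m_i=(1-\sigma_i)\cdot n$ for $i=1,2$.
   Context: The module action is written multiplicatively: for $c_g\in\mathbb Z$, $(\sum_g c_g g)\cdot m=\prod_g g(m)^{c_g}$; e.g. $(1+\sigma_i)\cdot m=m\,\sigma_i(m)$ and $(1-\sigma_i)\cdot m=m/\sigma_i(m)$, where $1$ denotes the identity of $G$ (as an element of $\mathbb Z[G]$), and the identity of $M$ is also written $1$. For $x\in\mathbb Z[G]$, $\ker x=\{m\in M: x\cdot m=1\}$. For subsets $A,B\subseteq M$, $A\cdot B=\{ab:a\in A,b\in B\}$. $(M,\sigma_1,\sigma_2)$ satisfies QH90 means: for each $i\in\{1,2\}$ and $m\in M$, if $(1+\sigma_i)\cdot m=1$ then there exists $n\in M$ with $m=(1-\sigma_i)\cdot n$. *)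

theory Defs
  imports "HOL-Algebra.Algebra"
begin

text \<open>A Z[G]-module for G = Z/2 x Z/2 with generators s1, s2, written multiplicatively:
  an abelian group M on which s1, s2 act by group endomorphisms with
  s1^2 = s2^2 = id and s1 s2 = s2 s1.\<close>
definition klein_module :: "('a, 'b) monoid_scheme \<Rightarrow> ('a \<Rightarrow> 'a) \<Rightarrow> ('a \<Rightarrow> 'a) \<Rightarrow> bool" where
  "klein_module M s1 s2 \<longleftrightarrow> comm_group M \<and> s1 \<in> hom M M \<and> s2 \<in> hom M M \<and>
     (\<forall>m \<in> carrier M. s1 (s1 m) = m \<and> s2 (s2 m) = m \<and> s1 (s2 m) = s2 (s1 m))"

definition one_minus :: "('a, 'b) monoid_scheme \<Rightarrow> ('a \<Rightarrow> 'a) \<Rightarrow> 'a \<Rightarrow> 'a" where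
  "one_minus M s m = m \<otimes>\<^bsub>M\<^esub> inv\<^bsub>M\<^esub> (s m)"

definition one_plus :: "('a, 'b) monoid_scheme \<Rightarrow> ('a \<Rightarrow> 'a) \<Rightarrow> 'a \<Rightarrow> 'a" where
  "one_plus M s m = m \<otimes>\<^bsub>M\<^esub> s m"

definition QH90 :: "('a, 'b) monoid_scheme \<Rightarrow> ('a \<Rightarrow> 'a) \<Rightarrow> ('a \<Rightarrow> 'a) \<Rightarrow> bool" where
  "QH90 M s1 s2 \<longleftrightarrow> (\<forall>s \<in> {s1, s2}. \<forall>m \<in> carrier M.
      one_plus M s m = \<one>\<^bsub>M\<^esub> \<longrightarrow> (\<exists>n \<in> carrier M. m = one_minus M s n))"

definition ker1 :: "('a, 'b) monoid_scheme \<Rightarrow> ('a \<Rightarrow> 'a) \<Rightarrow> 'a set" where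
  "ker1 M s = {m \<in> carrier M. one_minus M s m = \<one>\<^bsub>M\<^esub>}"

definition ker12 :: "('a, 'b) monoid_scheme \<Rightarrow> ('a \<Rightarrow> 'a) \<Rightarrow> ('a \<Rightarrow> 'a) \<Rightarrow> 'a set" where
  "ker12 M s1 s2 = {m \<in> carrier M. one_minus M s1 (one_minus M s2 m) = \<one>\<^bsub>M\<^esub>}"

end

theory Submission
  imports Defs
begin

text \<open>Condition (2) says (1 - s2) m1 = (1 - s1) m2. By QH90, m1 = (1 - s1) a; since the operators
  1 - s1 and 1 - s2 commute, m2 / (1 - s2) a is fixed by s1 and killed by 1 + s2, so QH90 again
  writes it as (1 - s2) b with b in ker (1 - s1)(1 - s2). A splitting b = c d with s1 c = c and
  s2 d = d yields the common preimage n = a c. Conversely, for m in ker (1 - s1)(1 - s2) the pair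
  (1, (1 - s2) m) is compatible, and a lift n of it splits m = n (n\<inverse> m) into a factor fixed by s1
  and one fixed by s2.\<close>

lemma (in comm_group) hom_group_inv:
  assumes "f \<in> hom H G"
  shows "(\<lambda>x. inv (f x)) \<in> hom H G"
  using assms by (auto simp: hom_def Pi_def inv_mult)

locale involutive_endomorphism = comm_group +
  fixes s :: "'a \<Rightarrow> 'a"
  assumes hom: "s \<in> hom G G"
    and involutive [simp]: "x \<in> carrier G \<Longrightarrow> s (s x) = x"
begin

sublocale group_hom G G s
  by unfold_locales (rule hom)

lemma one_minus_hom: "one_minus G s \<in> hom G G"
proof -
  have "(\<lambda>x. x) \<in> hom G G" by (simp add: hom_def)
  with hom show ?thesis
    unfolding one_minus_def by (intro hom_group_mult hom_group_inv)
qed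

lemma one_plus_hom: "one_plus G s \<in> hom G G"
proof -
  have "(\<lambda>x. x) \<in> hom G G" by (simp add: hom_def)
  with hom show ?thesis
    unfolding one_plus_def by (intro hom_group_mult)
qed

sublocale one_minus: group_hom G G "one_minus G s"
  by unfold_locales (rule one_minus_hom)

sublocale one_plus: group_hom G G "one_plus G s"
  by unfold_locales (rule one_plus_hom)

lemma one_minus_eq_one_iff: "x \<in> carrier G \<Longrightarrow> one_minus G s x = \<one> \<longleftrightarrow> s x = x"
  unfolding one_minus_def by (auto simp: inv_solve_right')

lemma s_one_minus: "x \<in> carrier G \<Longrightarrow> s (one_minus G s x) = inv (one_minus G s x)"
  unfolding one_minus_def by (simp add: inv_mult m_comm)

lemma one_plus_one_minus: "x \<in> carrier G \<Longrightarrow> one_plus G s (one_minus G s x) = \<one>"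
  unfolding one_plus_def[of G s "one_minus G s x"] by (simp add: s_one_minus)

end

locale klein_four_module = comm_group G +
  s1: involutive_endomorphism G s1 + s2: involutive_endomorphism G s2
  for G (structure) and s1 s2 +
  assumes commute: "x \<in> carrier G \<Longrightarrow> s1 (s2 x) = s2 (s1 x)"

lemma klein_module_iff: "klein_module G s1 s2 \<longleftrightarrow> klein_four_module G s1 s2"
  unfolding klein_module_def klein_four_module_def klein_four_module_axioms_def comm_group_def
    involutive_endomorphism_def involutive_endomorphism_axioms_def
  by auto

context klein_four_module
begin

lemma one_minus_commute:
  "x \<in> carrier G \<Longrightarrow> one_minus G s1 (one_minus G s2 x) = one_minus G s2 (one_minus G s1 x)"
  unfolding one_minus_def by (simp add: inv_mult commute m_ac)

lemma mem_ker12_iff: "x \<in> ker12 G s1 s2 \<longleftrightarrow> x \<in> carrier G \<and> one_minus G s2 x \<in> ker1 G s1"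
  unfolding ker12_def ker1_def by auto

lemma compatible_iff_one_minus_eq:
  assumes "m1 \<in> carrier G" "m2 \<in> carrier G"
  shows "m1 \<otimes> s1 m2 = m2 \<otimes> s2 m1 \<longleftrightarrow> one_minus G s2 m1 = one_minus G s1 m2"
proof -
  have "one_minus G s2 m1 = one_minus G s1 m2 \<longleftrightarrow> m1 = m2 \<otimes> s2 m1 \<otimes> inv (s1 m2)"
    using assms unfolding one_minus_def by (simp add: inv_solve_right' m_ac)
  also have "\<dots> \<longleftrightarrow> m2 \<otimes> s2 m1 = m1 \<otimes> s1 m2"
    using assms by (simp add: inv_solve_right)
  finally show ?thesis by auto
qed

lemma set_mult_ker1_subset_ker12: "ker1 G s1 <#> ker1 G s2 \<subseteq> ker12 G s1 s2"
proof
  fix x assume "x \<in> ker1 G s1 <#> ker1 G s2"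
  then obtain c d where c: "c \<in> ker1 G s1" and d: "d \<in> ker1 G s2" and x: "x = c \<otimes> d"
    unfolding set_mult_def by blast
  then have "one_minus G s1 (one_minus G s2 x) = one_minus G s2 (one_minus G s1 c)"
    by (simp add: ker1_def one_minus_commute)
  also have "\<dots> = \<one>"
    using c by (simp add: ker1_def)
  finally show "x \<in> ker12 G s1 s2"
    using c d x by (simp add: ker1_def ker12_def)
qed

lemma ker12_subset_set_mult_ker1:
  assumes lift: "\<And>x. x \<in> ker1 G s1 \<Longrightarrow> one_plus G s2 x = \<one> \<Longrightarrow> x \<in> one_minus G s2 ` ker1 G s1"
  shows "ker12 G s1 s2 \<subseteq> ker1 G s1 <#> ker1 G s2"
proof
  fix m assume "m \<in> ker12 G s1 s2"
  then have m: "m \<in> carrier G" and x: "one_minus G s2 m \<in> ker1 G s1"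
    by (simp_all add: mem_ker12_iff)
  moreover have "one_plus G s2 (one_minus G s2 m) = \<one>"
    using m by (rule s2.one_plus_one_minus)
  ultimately obtain n where n: "n \<in> ker1 G s1" and mn: "one_minus G s2 m = one_minus G s2 n"
    using lift by blast
  have n_carrier: "n \<in> carrier G"
    using n by (simp add: ker1_def)
  have "inv n \<otimes> m \<in> ker1 G s2"
    using m n_carrier mn by (simp add: ker1_def)
  moreover have "m = n \<otimes> (inv n \<otimes> m)"
    using m n_carrier by (simp add: m_assoc [symmetric])
  ultimately show "m \<in> ker1 G s1 <#> ker1 G s2"
    using n unfolding set_mult_def by blast
qed

lemma lift_compatible_pair:
  assumes ker12_subset: "ker12 G s1 s2 \<subseteq> ker1 G s1 <#> ker1 G s2"
    and qh90: "QH90 G s1 s2"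
    and m1: "m1 \<in> carrier G" "one_plus G s1 m1 = \<one>"
    and m2: "m2 \<in> carrier G" "one_plus G s2 m2 = \<one>"
    and compatible: "one_minus G s2 m1 = one_minus G s1 m2"
  obtains n where "n \<in> carrier G" "m1 = one_minus G s1 n" "m2 = one_minus G s2 n"
proof -
  obtain a where a: "a \<in> carrier G" and m1_eq: "m1 = one_minus G s1 a"
    using qh90 m1 unfolding QH90_def by blast
  define m2' where "m2' = m2 \<otimes> inv (one_minus G s2 a)"
  have m2': "m2' \<in> carrier G"
    using a m2 by (simp add: m2'_def)
  have "one_minus G s1 m2' = one_minus G s2 m1 \<otimes> inv (one_minus G s2 (one_minus G s1 a))"
    using a m2 by (simp add: m2'_def compatible one_minus_commute)
  then have m2'_fixed: "one_minus G s1 m2' = \<one>"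
    using a m1_eq by simp
  have "one_plus G s2 m2' = \<one>"
    using a m2 by (simp add: m2'_def s2.one_plus_one_minus)
  then obtain b where b: "b \<in> carrier G" and m2'_eq: "m2' = one_minus G s2 b"
    using qh90 m2' unfolding QH90_def by blast
  have "b \<in> ker12 G s1 s2"
    using b m2'_fixed m2'_eq by (simp add: ker12_def)
  then obtain c d where c: "c \<in> ker1 G s1" and d: "d \<in> ker1 G s2" and "b = c \<otimes> d"
    using ker12_subset unfolding set_mult_def by blast
  then have m2'_c: "m2' = one_minus G s2 c"
    using m2'_eq by (simp add: ker1_def)
  show thesis
  proof
    show "a \<otimes> c \<in> carrier G"
      using a c by (simp add: ker1_def)
    show "m1 = one_minus G s1 (a \<otimes> c)"
      using a c m1_eq by (simp add: ker1_def)
    have "m2 = m2' \<otimes> one_minus G s2 a"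
      using a m2 by (simp add: m2'_def m_assoc)
    then show "m2 = one_minus G s2 (a \<otimes> c)"
      using a c m2'_c by (simp add: ker1_def m_comm)
  qed
qed

end

theorem theorem3:
  fixes M :: "('a, 'b) monoid_scheme" and s1 s2 :: "'a \<Rightarrow> 'a"
  assumes "klein_module M s1 s2"
    and "QH90 M s1 s2"
  shows "ker12 M s1 s2 = ker1 M s1 <#>\<^bsub>M\<^esub> ker1 M s2 \<longleftrightarrow>
    (\<forall>m1 \<in> carrier M. \<forall>m2 \<in> carrier M.
       one_plus M s1 m1 = \<one>\<^bsub>M\<^esub> \<and> one_plus M s2 m2 = \<one>\<^bsub>M\<^esub> \<and>
       m1 \<otimes>\<^bsub>M\<^esub> s1 m2 = m2 \<otimes>\<^bsub>M\<^esub> s2 m1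
       \<longrightarrow> (\<exists>n \<in> carrier M. m1 = one_minus M s1 n \<and> m2 = one_minus M s2 n))"
    (is "?split \<longleftrightarrow> ?lifts")
proof -
  interpret klein_four_module M s1 s2
    using assms(1) by (simp add: klein_module_iff)
  show ?thesis
  proof
    assume ?split
    then show ?lifts
      using lift_compatible_pair[OF _ assms(2)] by (metis compatible_iff_one_minus_eq order_refl)
  next
    assume lifts: ?lifts
    have "ker12 M s1 s2 \<subseteq> ker1 M s1 <#>\<^bsub>M\<^esub> ker1 M s2"
    proof (rule ker12_subset_set_mult_ker1)
      fix x assume "x \<in> ker1 M s1" "one_plus M s2 x = \<one>\<^bsub>M\<^esub>"
      then show "x \<in> one_minus M s2 ` ker1 M s1"
        using lifts[rule_format, of "\<one>\<^bsub>M\<^esub>" x]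
        by (auto simp: ker1_def one_plus_def s1.one_minus_eq_one_iff)
    qed
    with set_mult_ker1_subset_ker12 show ?split by blast
  qed
qed

end
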